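(* Let $B\in\mathbb{C}^{n\times k}$ with $k\le n$ and $\operatorname{rank}(B)=k$, and let $P_*=B(B^{\mathrm{H}}B)^{-1/2}$ be the unique orthonormal polar factor of $B$. Given $P\in\mathbb{C}^{n\times k}$ with $P^{\mathrm{H}}P=I_k$, let $$\eta=\|B\|_{\mathrm{tr}}-\operatorname{Re}(\operatorname{tr}(P^{\mathrm{H}}B)),\qquad \epsilon=\sqrt{\frac{2\eta}{\sigma_{\min}(B)}}.$$ Then: (a) $$\frac{\|B-P(P^{\mathrm{H}}B)\|_{\mathrm{F}}}{\|B\|_2}\le\|\sin\Theta({\cal R}(P),{\cal R}(P_* ))\|_{\mathrm{F}}\le\epsilon;$$ (b) if $P^{\mathrm{H}}B$ is Hermitian positive definite, then $$\|P-P_*\|_{\mathrm{F}}\le\left(1+\frac{2\|B\|_2}{\sigma_{\min}(B)+\sigma_{\min}(P^{\mathrm{H}}B)}\right)\epsilon;$$ (c) if ${\cal R}(P)={\cal R}(P_* )$, then $\|P-P_*\|_{\mathrm{F}}\le\epsilon$.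
   Context: For a matrix $X$, $X^{\mathrm{H}}$ is its conjugate transpose, ${\cal R}(X)$ its column space, $\|X\|_2$ its largest singular value, $\|X\|_{\mathrm{F}}=\sqrt{\operatorname{tr}(X^{\mathrm{H}}X)}$ its Frobenius norm. For $B\in\mathbb{C}^{n\times k}$ with singular values $\sigma_1(B)\ge\cdots\ge\sigma_k(B)$, $\sigma_{\min}(B)=\sigma_k(B)$ and $\|B\|_{\mathrm{tr}}=\sum_{i=1}^k\sigma_i(B)$ (trace/nuclear norm); $\operatorname{Re}$ denotes the real part. A polar decomposition of $B$ is $B=P\Lambda$ with $P^{\mathrm{H}}P=I_k$ and $\Lambda\succeq0$; $P$ is an orthonormal polar factor. For two $k$-dimensional subspaces ${\cal X}={\cal R}(X)$, ${\cal Y}={\cal R}(Y)$ of $\mathbb{C}^n$ with $X,Y$ having orthonormal columns, the canonical angles are $\theta_i=\arccos\sigma_i(X^{\mathrm{H}}Y)\in[0,\pi/2]$, $i=1,\dots,k$; $\Theta({\cal X},{\cal Y})=\operatorname{diag}(\theta_1,\dots,\theta_k)$ and $\|\sin\Theta({\cal X},{\cal Y})\|_{\mathrm{F}}=\big(\sum_{i=1}^k\sin^2\theta_i\big)^{1/2}$. *)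

theory Defs
  imports "HOL-Analysis.Analysis" "HOL-Library.Multiset"
begin

text \<open>Complex matrices are represented as \<open>complex^'k^'n\<close> (an n-by-k matrix: rows indexed
  by \<open>'n\<close>, columns by \<open>'k\<close>), with \<open>**\<close> the matrix product and \<open>*v\<close> matrix-vector product.\<close>

definition cadj :: "complex^'k^'n \<Rightarrow> complex^'n^'k" where
  "cadj A = (\<chi> i j. cnj (A $ j $ i))"

definition orthonormal_cols :: "complex^'k^'n \<Rightarrow> bool" where
  "orthonormal_cols X \<longleftrightarrow> cadj X ** X = mat 1"

definition diag_mat :: "('k \<Rightarrow> real) \<Rightarrow> complex^'k^'k" where
  "diag_mat s = (\<chi> i j. if i = j then complex_of_real (s i) else 0)"

definition is_svd :: "complex^'k^'n \<Rightarrow> complex^'k^'n \<Rightarrow> ('k \<Rightarrow> real) \<Rightarrow> complex^'k^'k \<Rightarrow> bool" where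
  "is_svd B U s V \<longleftrightarrow> orthonormal_cols U \<and> orthonormal_cols V \<and> (\<forall>i. 0 \<le> s i)
     \<and> B = U ** diag_mat s ** cadj V"

definition singular_values :: "complex^'k^'n \<Rightarrow> real multiset" where
  "singular_values B = (SOME M. \<exists>U s V. is_svd B U s V \<and> M = image_mset s (mset_set UNIV))"

definition sigma_max :: "complex^'k^'n \<Rightarrow> real" where
  "sigma_max B = Max (set_mset (singular_values B))"

definition sigma_min :: "complex^'k^'n \<Rightarrow> real" where
  "sigma_min B = Min (set_mset (singular_values B))"

definition trace_norm :: "complex^'k^'n \<Rightarrow> real" where
  "trace_norm B = sum_mset (singular_values B)"

definition frob_norm :: "complex^'k^'n \<Rightarrow> real" where
  "frob_norm X = sqrt (Re (trace (cadj X ** X)))"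

definition col_space :: "complex^'k^'n \<Rightarrow> (complex^'n) set" where
  "col_space X = range (\<lambda>v. X *v v)"

definition cinner :: "complex^'n \<Rightarrow> complex^'n \<Rightarrow> complex" where
  "cinner x y = (\<Sum>i\<in>UNIV. cnj (x $ i) * y $ i)"

definition hermitian :: "complex^'k^'k \<Rightarrow> bool" where
  "hermitian M \<longleftrightarrow> cadj M = M"

definition pos_def :: "complex^'k^'k \<Rightarrow> bool" where
  "pos_def M \<longleftrightarrow> hermitian M \<and> (\<forall>x. x \<noteq> 0 \<longrightarrow> Re (cinner x (M *v x)) > 0)"

definition pos_semidef :: "complex^'k^'k \<Rightarrow> bool" where
  "pos_semidef M \<longleftrightarrow> hermitian M \<and> (\<forall>x. Re (cinner x (M *v x)) \<ge> 0)"

definition orth_polar_factor :: "complex^'k^'n \<Rightarrow> complex^'k^'n \<Rightarrow> bool" where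
  "orth_polar_factor P B \<longleftrightarrow> orthonormal_cols P \<and> (\<exists>\<Lambda>. pos_semidef \<Lambda> \<and> B = P ** \<Lambda>)"

text \<open>For X, Y with orthonormal columns: the Frobenius norm of sin \<Theta>(R(X), R(Y)),
  canonical angles being arccos of the singular values of X^H Y.\<close>
definition sin_theta_F :: "complex^'k^'n \<Rightarrow> complex^'k^'n \<Rightarrow> real" where
  "sin_theta_F X Y = sqrt (sum_mset (image_mset (\<lambda>\<sigma>. (sin (arccos \<sigma>))^2)
                                                (singular_values (cadj X ** Y))))"

end

theory Submission
  imports Defs
begin

text \<open>Write \<open>B = P\<^sub>* \<Lambda>\<close> with \<open>\<Lambda> = (B\<^sup>H B)\<^sup>1\<^sup>/\<^sup>2\<close>, whose eigenvalues are the singular values of \<open>B\<close>,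
  and put \<open>G = P\<^sup>H P\<^sub>*\<close>, \<open>W = P\<^sub>* - P G\<close>, \<open>X = I - G\<close>. Then \<open>\<parallel>W\<parallel>\<^sub>F = \<parallel>sin \<Theta>\<parallel>\<^sub>F\<close>,
  \<open>W\<^sup>H W = I - G\<^sup>H G\<close> and \<open>\<eta> = tr \<Lambda> - Re tr (G \<Lambda>)\<close>, which combine to the identity
  \<open>2\<eta> = \<langle>X, X\<Lambda>\<rangle> + \<langle>W, W\<Lambda>\<rangle>\<close> of real Frobenius inner products. Both terms are at least
  \<open>\<sigma>\<^sub>m\<^sub>i\<^sub>n(B)\<close> times the squared norm, which gives the upper bound in (a) and, since \<open>W = 0\<close> and
  \<open>\<parallel>P - P\<^sub>*\<parallel>\<^sub>F = \<parallel>X\<parallel>\<^sub>F\<close> when the ranges agree, also (c); the lower bound in (a) comes from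
  \<open>B - P P\<^sup>H B = W \<Lambda>\<close>. For (b), \<open>X\<^sup>H\<close> solves the Sylvester equation
  \<open>\<Lambda> X\<^sup>H + X\<^sup>H (P\<^sup>H B) = W\<^sup>H W \<Lambda>\<close>, whence \<open>\<parallel>X\<parallel>\<^sub>F \<le> \<parallel>B\<parallel>\<^sub>2 \<parallel>W\<parallel>\<^sub>F / (\<sigma>\<^sub>m\<^sub>i\<^sub>n(B) + \<sigma>\<^sub>m\<^sub>i\<^sub>n(P\<^sup>H B))\<close>,
  and \<open>P - P\<^sub>* = (P - P\<^sub>* G\<^sup>H) - P\<^sub>* X\<^sup>H\<close> with \<open>\<parallel>P - P\<^sub>* G\<^sup>H\<parallel>\<^sub>F = \<parallel>W\<parallel>\<^sub>F\<close>.\<close>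

lemma cadj_nth [simp]: "cadj A $ i $ j = cnj (A $ j $ i)"
  by (simp add: cadj_def)

lemma cadj_cadj [simp]: "cadj (cadj A) = A"
  by (simp add: vec_eq_iff)

lemma cadj_mat_1 [simp]: "cadj (mat 1) = mat 1"
  by (simp add: vec_eq_iff mat_def)

lemma cadj_mult: "cadj (A ** B) = cadj B ** cadj A"
  by (simp add: vec_eq_iff matrix_matrix_mult_def mult.commute)

lemma cadj_diff: "cadj (A - B) = cadj A - cadj B"
  by (simp add: vec_eq_iff)

lemma diag_mat_nth [simp]: "diag_mat s $ i $ j = (if i = j then complex_of_real (s i) else 0)"
  by (simp add: diag_mat_def)

lemma cadj_diag_mat [simp]: "cadj (diag_mat s) = diag_mat s"
  by (simp add: vec_eq_iff)

lemma matrix_mult_diag_mat_nth: "(A ** diag_mat s) $ i $ j = A $ i $ j * s j"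
  by (simp add: matrix_matrix_mult_def if_distrib if_distribR cong: if_cong)

lemma diag_mat_matrix_mult_nth: "(diag_mat s ** A) $ i $ j = s i * A $ i $ j"
  by (simp add: matrix_matrix_mult_def if_distrib if_distribR cong: if_cong)

lemma diag_mat_mult_diag_mat: "diag_mat s ** diag_mat t = diag_mat (\<lambda>i. s i * t i)"
  by (simp add: vec_eq_iff diag_mat_matrix_mult_nth)

lemma trace_diag_mat: "trace (diag_mat s) = complex_of_real (\<Sum>i\<in>UNIV. s i)"
  by (simp add: trace_def)

lemma Re_trace_cadj: "Re (trace (cadj A)) = Re (trace A)"
  by (simp add: trace_def Re_sum)

lemma matrix_sub_ldistrib: "(A :: 'a::ring_1^'m^'n) ** (B - C) = A ** B - A ** C"
  by (simp add: vec_eq_iff matrix_matrix_mult_def sum_subtractf algebra_simps)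

lemma matrix_sub_rdistrib: "((A :: 'a::ring_1^'m^'n) - B) ** C = A ** C - B ** C"
  by (simp add: vec_eq_iff matrix_matrix_mult_def sum_subtractf algebra_simps)

lemma matrix_add_rdistrib: "((A :: 'a::semiring_1^'m^'n) + B) ** C = A ** C + B ** C"
  by (simp add: vec_eq_iff matrix_matrix_mult_def sum.distrib algebra_simps)

lemma matrix_mul_left_inverse: "A ** B = mat 1 \<Longrightarrow> A ** (B ** X) = X"
  by (simp add: matrix_mul_assoc)

lemma trace_unitary_conj:
  fixes V :: "complex^'k^'k"
  assumes "cadj V ** V = mat 1"
  shows "trace (V ** M ** cadj V) = trace M"
  using assms trace_mul_sym[of "V ** M" "cadj V"] by (simp add: matrix_mul_assoc)

lemma unitary_right_inverse:
  fixes V :: "complex^'k^'k"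
  assumes "cadj V ** V = mat 1"
  shows "V ** cadj V = mat 1"
  using assms matrix_left_right_inverse by blast

lemma inner_eq_Re_trace:
  fixes X Y :: "complex^'k^'n"
  shows "inner X Y = Re (trace (cadj X ** Y))"
proof -
  have "inner X Y = (\<Sum>i\<in>UNIV. \<Sum>j\<in>UNIV. Re (cnj (X$i$j) * Y$i$j))"
    by (simp add: inner_vec_def inner_complex_def)
  also have "\<dots> = (\<Sum>j\<in>UNIV. \<Sum>i\<in>UNIV. Re (cnj (X$i$j) * Y$i$j))"
    by (rule sum.swap)
  also have "\<dots> = Re (trace (cadj X ** Y))"
    by (simp add: trace_def matrix_matrix_mult_def Re_sum)
  finally show ?thesis .
qed

lemma frob_norm_eq_norm: "frob_norm X = norm X"
  by (simp add: frob_norm_def norm_eq_sqrt_inner inner_eq_Re_trace)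

lemma inner_cadj: "inner (cadj X) (cadj Y) = inner X Y"
proof -
  have "inner (cadj X) (cadj Y) = (\<Sum>i\<in>UNIV. \<Sum>j\<in>UNIV. inner (X$j$i) (Y$j$i))"
    by (simp add: inner_vec_def inner_complex_def)
  also have "\<dots> = inner X Y"
    unfolding inner_vec_def by (rule sum.swap)
  finally show ?thesis .
qed

lemma norm_cadj: "norm (cadj X) = norm X"
  by (simp add: norm_eq_sqrt_inner inner_cadj)

lemma norm_vec_sq: "(norm (z :: complex^'n))\<^sup>2 = (\<Sum>i\<in>UNIV. (cmod (z$i))\<^sup>2)"
  by (simp add: norm_vec_def L2_set_def sum_nonneg)

lemma Re_cinner: "Re (cinner x y) = inner x y"
  by (simp add: cinner_def inner_vec_def inner_complex_def Re_sum)

lemma cinner_self: "cinner x x = complex_of_real ((norm x)\<^sup>2)"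
proof -
  have "cinner x x = (\<Sum>i\<in>UNIV. complex_of_real ((cmod (x$i))\<^sup>2))"
    by (simp add: cinner_def complex_norm_square[symmetric] mult.commute)
  then show ?thesis
    by (simp add: norm_vec_sq)
qed

lemma cinner_commute: "cinner y x = cnj (cinner x y)"
  by (simp add: cinner_def mult.commute)

lemma cinner_matrix_right: "cinner x (A *v y) = cinner (cadj A *v x) y"
  by (simp add: cinner_def matrix_vector_mult_def sum_distrib_left sum_distrib_right mult_ac)
    (rule sum.swap)

lemma inner_matrix_right: "inner x (A *v y) = inner (cadj A *v x) y"
  by (metis Re_cinner cinner_matrix_right)

lemma cinner_add_right: "cinner x (y + z) = cinner x y + cinner x z"
  by (simp add: cinner_def distrib_left sum.distrib)

lemma cinner_diff_right: "cinner x (y - z) = cinner x y - cinner x z"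
  by (simp add: cinner_def right_diff_distrib sum_subtractf)

lemma cinner_scaleR_right: "cinner x (c *\<^sub>R y) = complex_of_real c * cinner x y"
  unfolding cinner_def sum_distrib_left vector_scaleR_component
  by (simp add: scaleR_conv_of_real mult_ac)

lemma cinner_scaleR_left: "cinner (c *\<^sub>R y) x = complex_of_real c * cinner y x"
  unfolding cinner_def sum_distrib_left vector_scaleR_component
  by (simp add: scaleR_conv_of_real mult_ac)

lemma cinner_scale_right: "cinner x (c *s y) = c * cinner x y"
  by (simp add: cinner_def sum_distrib_left mult_ac)

lemma cinner_sum_right: "cinner x (sum f S) = (\<Sum>j\<in>S. cinner x (f j))"
  by (simp add: cinner_def sum_distrib_left sum_component) (rule sum.swap)

lemma cinner_axis_right: "cinner x (axis i 1) = cnj (x $ i)"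
  by (simp add: cinner_def axis_def if_distrib if_distribR cong: if_cong)

definition mat_of_cols :: "('k \<Rightarrow> 'a^'n) \<Rightarrow> 'a^'k^'n" where
  "mat_of_cols f = (\<chi> r c. f c $ r)"

lemma mat_of_cols_nth [simp]: "mat_of_cols f $ r $ c = f c $ r"
  by (simp add: mat_of_cols_def)

lemma mat_of_cols_column: "mat_of_cols (\<lambda>c. column c A) = A"
  by (simp add: column_def vec_eq_iff)

lemma matrix_mult_mat_of_cols: "A ** mat_of_cols f = mat_of_cols (\<lambda>c. A *v f c)"
  by (simp add: vec_eq_iff matrix_matrix_mult_def matrix_vector_mult_def)

lemma mat_of_cols_mult_diag_mat:
  "mat_of_cols f ** diag_mat s = mat_of_cols (\<lambda>c. complex_of_real (s c) *s f c)"
  by (simp add: vec_eq_iff matrix_mult_diag_mat_nth mult.commute)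

lemma cadj_mat_of_cols_mult_nth: "(cadj (mat_of_cols f) ** mat_of_cols g) $ i $ j = cinner (f i) (g j)"
  by (simp add: matrix_matrix_mult_def cinner_def)

lemma cadj_mult_nth: "(cadj X ** Y) $ i $ j = cinner (column i X) (column j Y)"
  by (simp add: matrix_matrix_mult_def cinner_def column_def)

lemma column_diff: "column j (A - B) = column j A - column j B"
  by (simp add: column_def vec_eq_iff)

lemma column_matrix_mult: "column j (A ** X) = A *v column j X"
  by (simp add: column_def vec_eq_iff matrix_matrix_mult_def matrix_vector_mult_def)

lemma inner_columns: "inner (X :: complex^'k^'n) Y = (\<Sum>j\<in>UNIV. inner (column j X) (column j Y))"
proof -
  have "inner X Y = (\<Sum>j\<in>UNIV. \<Sum>i\<in>UNIV. inner (X$i$j) (Y$i$j))"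
    unfolding inner_vec_def by (rule sum.swap)
  then show ?thesis
    by (simp add: inner_vec_def column_def)
qed

lemma norm_sq_columns: "(norm (X :: complex^'k^'n))\<^sup>2 = (\<Sum>j\<in>UNIV. (norm (column j X))\<^sup>2)"
  by (simp add: power2_norm_eq_inner inner_columns)

lemma norm_matrix_mult_le:
  fixes A :: "complex^'m^'n" and X :: "complex^'k^'m"
  assumes c: "0 \<le> c" and bound: "\<And>x. norm (A *v x) \<le> c * norm x"
  shows "norm (A ** X) \<le> c * norm X"
proof -
  have "(norm (A ** X))\<^sup>2 = (\<Sum>j\<in>UNIV. (norm (A *v column j X))\<^sup>2)"
    by (simp add: norm_sq_columns column_matrix_mult)
  also have "\<dots> \<le> (\<Sum>j\<in>UNIV. (c * norm (column j X))\<^sup>2)"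
    by (rule sum_mono) (rule power_mono[OF bound], simp)
  also have "\<dots> = (c * norm X)\<^sup>2"
    by (simp add: norm_sq_columns power_mult_distrib sum_distrib_left)
  finally show ?thesis
    by (rule power2_le_imp_le) (simp add: c)
qed

lemma norm_matrix_mult_right_le:
  fixes A :: "complex^'m^'m" and X :: "complex^'m^'n"
  assumes "0 \<le> c" and "\<And>x. norm (cadj A *v x) \<le> c * norm x"
  shows "norm (X ** A) \<le> c * norm X"
  using norm_matrix_mult_le[OF assms, of "cadj X"] by (simp add: norm_cadj flip: cadj_mult)

lemma inner_matrix_mult_ge:
  fixes A :: "complex^'n^'n" and X :: "complex^'k^'n"
  assumes "\<And>x. m * (norm x)\<^sup>2 \<le> inner x (A *v x)"
  shows "m * (norm X)\<^sup>2 \<le> inner X (A ** X)"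
proof -
  have "m * (norm X)\<^sup>2 = (\<Sum>j\<in>UNIV. m * (norm (column j X))\<^sup>2)"
    by (simp add: norm_sq_columns sum_distrib_left)
  also have "\<dots> \<le> (\<Sum>j\<in>UNIV. inner (column j X) (A *v column j X))"
    by (intro sum_mono assms)
  also have "\<dots> = inner X (A ** X)"
    by (simp add: inner_columns column_matrix_mult)
  finally show ?thesis .
qed

lemma inner_matrix_mult_right_ge:
  fixes A :: "complex^'m^'m" and X :: "complex^'m^'n"
  assumes "hermitian A" and "\<And>x. m * (norm x)\<^sup>2 \<le> inner x (A *v x)"
  shows "m * (norm X)\<^sup>2 \<le> inner X (X ** A)"
proof -
  have "A ** cadj X = cadj (X ** A)"
    using assms(1) by (simp add: hermitian_def cadj_mult)
  then show ?thesis
    using inner_matrix_mult_ge[OF assms(2), of "cadj X"] by (simp add: norm_cadj inner_cadj)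
qed

lemma orthonormal_cols_mat_1: "orthonormal_cols (mat 1)"
  by (simp add: orthonormal_cols_def)

lemma orthonormal_cols_cadj:
  fixes V :: "complex^'k^'k"
  assumes "cadj V ** V = mat 1"
  shows "orthonormal_cols (cadj V)"
  using unitary_right_inverse[OF assms] by (simp add: orthonormal_cols_def)

lemma orthonormal_cols_norm_mult:
  assumes "orthonormal_cols Q"
  shows "norm (Q *v x) = norm x"
proof -
  have "inner (Q *v x) (Q *v x) = inner (cadj Q *v (Q *v x)) x"
    by (rule inner_matrix_right)
  also have "cadj Q *v (Q *v x) = x"
    using assms by (simp add: matrix_vector_mul_assoc orthonormal_cols_def)
  finally show ?thesis
    by (simp add: norm_eq_sqrt_inner)
qed

lemma orthonormal_cols_norm_matrix_mult:
  assumes "orthonormal_cols Q"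
  shows "norm (Q ** Y) = norm Y"
proof -
  have "(norm (Q ** Y))\<^sup>2 = (norm Y)\<^sup>2"
    by (simp add: norm_sq_columns column_matrix_mult orthonormal_cols_norm_mult[OF assms])
  then show ?thesis
    by (simp add: power2_eq_iff_nonneg)
qed

lemma orthonormal_cols_norm_column:
  assumes "orthonormal_cols U"
  shows "norm (column i U) = 1"
proof -
  have "cinner (column i U) (column i U) = 1"
    using arg_cong[OF assms[unfolded orthonormal_cols_def], of "\<lambda>M. M $ i $ i"]
    by (simp add: cadj_mult_nth mat_def)
  then have "complex_of_real ((norm (column i U))\<^sup>2) = complex_of_real 1"
    by (simp only: cinner_self of_real_1)
  then have "(norm (column i U))\<^sup>2 = 1"
    by (simp only: of_real_eq_iff)
  then show ?thesis
    using norm_ge_zero[of "column i U"] by (auto simp: power2_eq_1_iff)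
qed

lemma orthonormal_cols_norm_sq:
  fixes Q :: "complex^'k^'n"
  assumes "orthonormal_cols Q"
  shows "(norm Q)\<^sup>2 = real CARD('k)"
  by (simp add: norm_sq_columns orthonormal_cols_norm_column[OF assms])

lemma norm_proj_residual_sq:
  assumes "orthonormal_cols Q"
  shows "(norm (y - Q *v (cadj Q *v y)))\<^sup>2 = (norm y)\<^sup>2 - (norm (cadj Q *v y))\<^sup>2"
proof -
  let ?w = "cadj Q *v y"
  have "inner y (Q *v ?w) = (norm ?w)\<^sup>2"
    by (simp add: inner_matrix_right power2_norm_eq_inner)
  moreover have "(norm (Q *v ?w))\<^sup>2 = (norm ?w)\<^sup>2"
    by (simp add: orthonormal_cols_norm_mult[OF assms])
  ultimately show ?thesis
    by (simp add: power2_norm_eq_inner inner_diff_left inner_diff_right inner_commute)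
qed

lemma norm_cadj_orthonormal_mult_le:
  assumes "orthonormal_cols Q"
  shows "norm (cadj Q *v y) \<le> norm y"
  using norm_proj_residual_sq[OF assms, of y]
  by (metis diff_ge_0_iff_ge norm_ge_zero power2_le_imp_le zero_le_power2)

lemma norm_proj_residual_le:
  assumes "orthonormal_cols Q"
  shows "norm (y - Q *v (cadj Q *v y)) \<le> norm y"
proof (rule power2_le_imp_le)
  show "(norm (y - Q *v (cadj Q *v y)))\<^sup>2 \<le> (norm y)\<^sup>2"
    using norm_proj_residual_sq[OF assms, of y] by simp
qed simp

lemma norm_proj_residual_matrix_sq:
  assumes "orthonormal_cols Q"
  shows "(norm (Y - Q ** (cadj Q ** Y)))\<^sup>2 = (norm Y)\<^sup>2 - (norm (cadj Q ** Y))\<^sup>2"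
proof -
  have "(norm (Y - Q ** (cadj Q ** Y)))\<^sup>2 =
      (\<Sum>j\<in>UNIV. (norm (column j Y - Q *v (cadj Q *v column j Y)))\<^sup>2)"
    by (simp add: norm_sq_columns column_diff column_matrix_mult)
  also have "\<dots> = (\<Sum>j\<in>UNIV. (norm (column j Y))\<^sup>2 - (norm (cadj Q *v column j Y))\<^sup>2)"
    by (simp add: norm_proj_residual_sq[OF assms])
  also have "\<dots> = (norm Y)\<^sup>2 - (norm (cadj Q ** Y))\<^sup>2"
    by (simp add: sum_subtractf norm_sq_columns column_matrix_mult)
  finally show ?thesis .
qed

definition orthonormal_on :: "'a set \<Rightarrow> ('a \<Rightarrow> complex^'n) \<Rightarrow> bool" where
  "orthonormal_on J f \<longleftrightarrow> (\<forall>i\<in>J. \<forall>j\<in>J. cinner (f i) (f j) = (if i = j then 1 else 0))"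

lemma orthonormal_on_insert:
  assumes f: "orthonormal_on J f" and i: "i \<notin> J"
    and y: "norm y = 1" and y_orth: "\<forall>j\<in>J. cinner (f j) y = 0"
  shows "orthonormal_on (insert i J) (f(i := y))"
proof -
  have "cinner y y = 1"
    using y by (simp add: cinner_self)
  moreover have "\<forall>j\<in>J. cinner y (f j) = 0"
    using y_orth cinner_commute by (metis complex_cnj_zero)
  ultimately show ?thesis
    using f i y_orth by (auto simp: orthonormal_on_def)
qed

lemma exists_unit_orthogonal:
  fixes f :: "'a \<Rightarrow> complex^'n"
  assumes fin: "finite J" and card: "card J < CARD('n)" and orth: "orthonormal_on J f"
  obtains y where "norm y = 1" and "\<forall>j\<in>J. cinner (f j) y = 0"
proof -
  define p where "p e = e - (\<Sum>j\<in>J. cinner (f j) e *s f j)" for e :: "complex^'n"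
  have p_orth: "cinner (f l) (p e) = 0" if l: "l \<in> J" for l e
  proof -
    have "(\<Sum>j\<in>J. cinner (f j) e * cinner (f l) (f j)) = (\<Sum>j\<in>J. if l = j then cinner (f j) e else 0)"
      using l orth by (intro sum.cong) (auto simp: orthonormal_on_def)
    then show ?thesis
      using l fin by (simp add: p_def cinner_diff_right cinner_sum_right cinner_scale_right)
  qed
  have "\<exists>i. p (axis i 1) \<noteq> 0"
  proof (rule ccontr)
    assume "\<not> ?thesis"
    \<comment> \<open>then every standard basis vector is in the span of the \<open>f j\<close>; compare traces\<close>
    then have "axis i 1 = (\<Sum>j\<in>J. cinner (f j) (axis i 1) *s f j)" for i
      by (simp add: p_def)
    then have one: "1 = (\<Sum>j\<in>J. cnj (f j $ i) * f j $ i)" for i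
      by (metis (no_types, lifting) axis_nth cinner_axis_right sum.cong sum_component
          vector_smult_component)
    have "of_nat CARD('n) = (\<Sum>i\<in>(UNIV::'n set). \<Sum>j\<in>J. cnj (f j $ i) * f j $ i)"
      using one by simp
    also have "\<dots> = (\<Sum>j\<in>J. cinner (f j) (f j))"
      unfolding cinner_def by (rule sum.swap)
    also have "\<dots> = of_nat (card J)"
      using orth by (simp add: orthonormal_on_def)
    finally show False
      using card by (metis less_irrefl of_nat_eq_iff)
  qed
  then obtain i where pi: "p (axis i 1) \<noteq> 0"
    by blast
  show ?thesis
  proof (rule that)
    show "norm ((1 / norm (p (axis i 1))) *\<^sub>R p (axis i 1)) = 1"
      using pi by simp
    show "\<forall>j\<in>J. cinner (f j) ((1 / norm (p (axis i 1))) *\<^sub>R p (axis i 1)) = 0"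
      using p_orth by (simp add: cinner_scaleR_right)
  qed
qed

lemma orthonormal_on_extend:
  fixes f :: "'k::finite \<Rightarrow> complex^'n"
  assumes kn: "CARD('k) \<le> CARD('n)" and f: "orthonormal_on J f"
  obtains g where "\<forall>i\<in>J. g i = f i" and "orthonormal_on UNIV g"
proof -
  have "\<exists>g. (\<forall>i\<in>J. g i = f i) \<and> orthonormal_on (J \<union> K) g" for K :: "'k set"
  proof (induction K rule: finite_induct[OF finite])
    case 1
    show ?case
      using f by auto
  next
    case (2 i K)
    then obtain g where g: "\<forall>i\<in>J. g i = f i" "orthonormal_on (J \<union> K) g"
      by blast
    show ?case
    proof (cases "i \<in> J")
      case True
      then have "J \<union> insert i K = J \<union> K"
        by blast
      then show ?thesis
        using g by (intro exI[of _ g]) simp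
    next
      case False
      then have "J \<union> K \<subset> UNIV"
        using 2(2) by blast
      then have "card (J \<union> K) < CARD('k)"
        by (simp add: psubset_card_mono)
      with kn have "card (J \<union> K) < CARD('n)"
        by linarith
      then obtain y where y: "norm y = 1" "\<forall>j\<in>J \<union> K. cinner (g j) y = 0"
        using exists_unit_orthogonal[OF finite _ g(2)] by blast
      have "orthonormal_on (J \<union> insert i K) (g(i := y))"
        using orthonormal_on_insert[OF g(2) _ y] False 2(2) by simp
      moreover have "\<forall>j\<in>J. (g(i := y)) j = f j"
        using g(1) False by auto
      ultimately show ?thesis
        by blast
    qed
  qed
  from this[of UNIV] obtain g where "\<forall>i\<in>J. g i = f i" and "orthonormal_on UNIV g"
    by auto
  then show ?thesis
    by (rule that)
qed

section \<open>The spectral theorem for Hermitian matrices\<close>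

lemma subspace_cinner_orthogonal: "subspace {y. \<forall>j\<in>J. cinner (f j) y = 0}"
  by (auto simp: subspace_def cinner_add_right cinner_scaleR_right) (simp add: cinner_def)

lemma closed_cinner_orthogonal: "closed {y. \<forall>j\<in>J. cinner (f j) y = 0}"
proof -
  have "closed {y. cinner (f j) y = 0}" for j
    unfolding cinner_def by (intro closed_Collect_eq continuous_intros)
  then have "closed (\<Inter>j\<in>J. {y. cinner (f j) y = 0})"
    by blast
  moreover have "(\<Inter>j\<in>J. {y. cinner (f j) y = 0}) = {y. \<forall>j\<in>J. cinner (f j) y = 0}"
    by auto
  ultimately show ?thesis
    by simp
qed

lemma psd_form_vanishing_imp_zero:
  fixes N :: "'a::real_inner \<Rightarrow> 'a"
  assumes lin: "linear N" and sym: "\<And>a b. inner a (N b) = inner (N a) b"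
    and S: "subspace S" and y: "y \<in> S" and Ny: "N y \<in> S"
    and nonneg: "\<And>z. z \<in> S \<Longrightarrow> 0 \<le> inner z (N z)" and zero: "inner y (N y) = 0"
  shows "N y = 0"
proof (rule ccontr)
  define w where "w = N y"
  assume "N y \<noteq> 0"
  then have w: "0 < inner w w"
    by (simp add: w_def)
  have "inner (y - t *\<^sub>R w) (N (y - t *\<^sub>R w)) = t\<^sup>2 * inner w (N w) - 2 * t * inner w w" for t
    using zero sym[of y w]
    by (simp add: real_vector.linear_diff[OF lin] linear_cmul[OF lin] inner_diff_left
        inner_diff_right w_def inner_commute power2_eq_square algebra_simps)
  moreover have "y - t *\<^sub>R w \<in> S" for t
    using S y Ny by (simp add: w_def real_vector.subspace_diff real_vector.subspace_scale)
  ultimately have ge: "2 * t * inner w w \<le> t\<^sup>2 * inner w (N w)" for t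
    using nonneg by (metis diff_ge_0_iff_ge)
  show False
  proof (cases "inner w (N w) \<le> 0")
    case True
    then show False
      using ge[of 1] w by simp
  next
    case False
    define t where "t = inner w w / inner w (N w)"
    have "0 < t"
      using False w by (simp add: t_def)
    moreover have "t\<^sup>2 * inner w (N w) = t * inner w w"
      using False by (simp add: t_def power2_eq_square)
    ultimately show False
      using ge[of t] w by (simp add: mult_pos_pos)
  qed
qed

lemma exists_rayleigh_max:
  fixes A :: "complex^'k^'k"
  assumes S: "subspace S" "closed S" and y1: "y1 \<in> S" "norm y1 = 1"
  obtains y0 where "y0 \<in> S" and "norm y0 = 1"
    and "\<And>z. z \<in> S \<Longrightarrow> inner z (A *v z) \<le> inner y0 (A *v y0) * (norm z)\<^sup>2"
proof -
  define q where "q y = inner y (A *v y)" for y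
  have "compact (S \<inter> sphere 0 1)"
    using S(2) by (rule closed_Int_compact[OF _ compact_sphere])
  moreover have "S \<inter> sphere 0 1 \<noteq> {}"
    using y1 by auto
  moreover have "continuous_on (S \<inter> sphere 0 1) q"
    unfolding q_def
    by (rule continuous_on_inner[OF continuous_on_id matrix_vector_mult_linear_continuous_on])
  ultimately obtain y0 where y0: "y0 \<in> S \<inter> sphere 0 1" and max: "\<forall>y\<in>S \<inter> sphere 0 1. q y \<le> q y0"
    using continuous_attains_sup by blast
  have q_scale: "q (c *\<^sub>R y) = c\<^sup>2 * q y" for c y
    by (simp add: q_def linear_cmul[OF matrix_vector_mul_linear] power2_eq_square)
  have bound: "q z \<le> q y0 * (norm z)\<^sup>2" if z: "z \<in> S" for z
  proof (cases "z = 0")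
    case False
    define u where "u = (1 / norm z) *\<^sub>R z"
    have "u \<in> S \<inter> sphere 0 1"
      using z False S(1) by (simp add: u_def real_vector.subspace_scale)
    then have "q u \<le> q y0"
      using max by blast
    moreover have "q z = (norm z)\<^sup>2 * q u"
      using False by (simp add: u_def q_scale power2_eq_square)
    ultimately show ?thesis
      by (metis mult.commute mult_right_mono zero_le_power2)
  qed (simp add: q_def)
  show ?thesis
  proof (rule that)
    show "y0 \<in> S" "norm y0 = 1"
      using y0 by auto
    show "inner z (A *v z) \<le> inner y0 (A *v y0) * (norm z)\<^sup>2" if "z \<in> S" for z
      using bound[OF that] by (simp add: q_def)
  qed
qed

lemma hermitian_eigenvector_orthogonal:
  fixes A :: "complex^'k^'k" and f :: "'a \<Rightarrow> complex^'k"
  assumes herm: "hermitian A" and J: "finite J" "card J < CARD('k)" and orth: "orthonormal_on J f"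
    and eig: "\<forall>j\<in>J. A *v f j = l j *\<^sub>R f j"
  obtains y r where "norm y = 1" and "\<forall>j\<in>J. cinner (f j) y = 0" and "A *v y = r *\<^sub>R y"
proof -
  define S where "S = {y. \<forall>j\<in>J. cinner (f j) y = 0}"
  have S: "subspace S" "closed S"
    unfolding S_def by (rule subspace_cinner_orthogonal closed_cinner_orthogonal)+
  have invariant: "A *v z \<in> S" if "z \<in> S" for z
  proof -
    have "cinner (f j) (A *v z) = complex_of_real (l j) * cinner (f j) z" if "j \<in> J" for j
      using herm eig that by (simp add: cinner_matrix_right hermitian_def cinner_scaleR_left)
    then show ?thesis
      using \<open>z \<in> S\<close> by (simp add: S_def)
  qed
  obtain y1 where y1: "norm y1 = 1" "\<forall>j\<in>J. cinner (f j) y1 = 0"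
    using exists_unit_orthogonal[OF J orth] .
  then have "y1 \<in> S"
    by (simp add: S_def)
  then obtain y0 where y0: "y0 \<in> S" "norm y0 = 1"
    and max: "\<And>z. z \<in> S \<Longrightarrow> inner z (A *v z) \<le> inner y0 (A *v y0) * (norm z)\<^sup>2"
    using exists_rayleigh_max[OF S _ y1(1), where A = A] by blast
  define r where "r = inner y0 (A *v y0)"
  \<comment> \<open>maximality makes the form of \<open>r I - A\<close> nonnegative on \<open>S\<close>, and it vanishes at \<open>y0\<close>\<close>
  have "r *\<^sub>R y0 - A *v y0 = 0"
  proof (rule psd_form_vanishing_imp_zero[OF _ _ S(1) y0(1)])
    show "linear (\<lambda>z. r *\<^sub>R z - A *v z)"
      by (intro linearI) (simp_all add: matrix_vector_right_distrib linear_cmul[OF matrix_vector_mul_linear]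
          algebra_simps)
    show "inner a (r *\<^sub>R b - A *v b) = inner (r *\<^sub>R a - A *v a) b" for a b
      using herm inner_matrix_right[of a A b]
      by (simp add: hermitian_def inner_diff_left inner_diff_right)
    show "r *\<^sub>R y0 - A *v y0 \<in> S"
      using S(1) y0(1) invariant
      by (simp add: real_vector.subspace_diff real_vector.subspace_scale)
    show "0 \<le> inner z (r *\<^sub>R z - A *v z)" if "z \<in> S" for z
      using max[OF that] by (simp add: r_def inner_diff_right power2_norm_eq_inner)
    show "inner y0 (r *\<^sub>R y0 - A *v y0) = 0"
      using y0(2) by (simp add: r_def inner_diff_right power2_norm_eq_inner[symmetric])
  qed
  then have "A *v y0 = r *\<^sub>R y0"
    by simp
  with y0 show ?thesis
    by (intro that[of y0 r]) (simp_all add: S_def)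
qed

lemma hermitian_orthonormal_eigenvectors:
  fixes A :: "complex^'k^'k" and J :: "'k set"
  assumes herm: "hermitian A"
  shows "\<exists>f l. orthonormal_on J f \<and> (\<forall>j\<in>J. A *v f j = l j *\<^sub>R f j)"
proof (induction J rule: finite_induct[OF finite])
  case 1
  show ?case
    by (simp add: orthonormal_on_def)
next
  case (2 i J)
  then obtain f l where f: "orthonormal_on J f" and l: "\<forall>j\<in>J. A *v f j = l j *\<^sub>R f j"
    by blast
  have "J \<subset> UNIV"
    using 2(2) by auto
  then have "card J < CARD('k)"
    by (simp add: psubset_card_mono)
  then obtain y r where y: "norm y = 1" "\<forall>j\<in>J. cinner (f j) y = 0" "A *v y = r *\<^sub>R y"
    using hermitian_eigenvector_orthogonal[OF herm finite _ f l] by blast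
  have "orthonormal_on (insert i J) (f(i := y))"
    by (rule orthonormal_on_insert[OF f 2(2) y(1,2)])
  moreover have "\<forall>j\<in>insert i J. A *v (f(i := y)) j = (l(i := r)) j *\<^sub>R (f(i := y)) j"
    using l y(3) 2(2) by auto
  ultimately show ?case
    by blast
qed

theorem hermitian_spectral:
  fixes A :: "complex^'k^'k"
  assumes "hermitian A"
  obtains V :: "complex^'k^'k" and l where "cadj V ** V = mat 1" and "A = V ** diag_mat l ** cadj V"
proof -
  have "\<exists>(f :: 'k \<Rightarrow> complex^'k) l. orthonormal_on UNIV f \<and> (\<forall>j. A *v f j = l j *\<^sub>R f j)"
    using hermitian_orthonormal_eigenvectors[OF assms, of UNIV] by simp
  then obtain f :: "'k \<Rightarrow> complex^'k" and l where f: "orthonormal_on UNIV f"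
    and eig: "\<And>j. A *v f j = l j *\<^sub>R f j"
    by blast
  define V where "V = mat_of_cols f"
  have V: "cadj V ** V = mat 1"
    using f by (simp add: V_def vec_eq_iff cadj_mat_of_cols_mult_nth mat_def orthonormal_on_def)
  have "(A *v f j) $ i = complex_of_real (l j) * f j $ i" for i j
    by (simp only: eig vector_scaleR_component) (simp add: scaleR_conv_of_real)
  then have "A ** V = V ** diag_mat l"
    by (simp add: V_def matrix_mult_mat_of_cols mat_of_cols_mult_diag_mat vec_eq_iff)
  then have "A = V ** diag_mat l ** cadj V"
    by (metis V matrix_mul_assoc matrix_mul_rid unitary_right_inverse)
  then show ?thesis
    by (rule that[OF V])
qed

lemma inner_unitary_diag_ge:
  fixes V :: "complex^'k^'k"
  assumes V: "cadj V ** V = mat 1" and m: "\<And>i. m \<le> d i"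
  shows "m * (norm x)\<^sup>2 \<le> inner x ((V ** diag_mat d ** cadj V) *v x)"
proof -
  define y where "y = cadj V *v x"
  have "norm y = norm x"
    using orthonormal_cols_norm_mult[OF orthonormal_cols_cadj[OF V]] by (simp add: y_def)
  then have "m * (norm x)\<^sup>2 = (\<Sum>i\<in>UNIV. m * (cmod (y$i))\<^sup>2)"
    by (metis norm_vec_sq sum_distrib_left)
  also have "\<dots> \<le> (\<Sum>i\<in>UNIV. d i * (cmod (y$i))\<^sup>2)"
    by (intro sum_mono mult_right_mono m) simp
  also have "\<dots> = inner y (diag_mat d *v y)"
  proof -
    have "(cmod z)\<^sup>2 = Re z * Re z + Im z * Im z" for z
      using cmod_power2[of z] by (simp only: power2_eq_square)
    then show ?thesis
      by (simp add: inner_vec_def matrix_vector_mult_def inner_complex_def if_distrib if_distribR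
          algebra_simps cong: if_cong)
  qed
  also have "\<dots> = inner x (V *v (diag_mat d *v y))"
    by (simp add: y_def inner_matrix_right)
  also have "\<dots> = inner x ((V ** diag_mat d ** cadj V) *v x)"
    by (simp add: y_def matrix_vector_mul_assoc matrix_mul_assoc)
  finally show ?thesis .
qed

lemma norm_unitary_diag_le:
  fixes V :: "complex^'k^'k"
  assumes V: "cadj V ** V = mat 1" and M: "\<And>i. \<bar>d i\<bar> \<le> M"
  shows "norm ((V ** diag_mat d ** cadj V) *v x) \<le> M * norm x"
proof -
  define y where "y = cadj V *v x"
  have "norm y = norm x"
    using orthonormal_cols_norm_mult[OF orthonormal_cols_cadj[OF V]] by (simp add: y_def)
  have M0: "0 \<le> M"
    using M[of undefined] by linarith
  have "(norm (diag_mat d *v y))\<^sup>2 = (\<Sum>i\<in>UNIV. (d i)\<^sup>2 * (cmod (y$i))\<^sup>2)"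
    by (simp add: norm_vec_sq matrix_vector_mult_def norm_mult power_mult_distrib
        if_distrib if_distribR cong: if_cong)
  also have "\<dots> \<le> (\<Sum>i\<in>UNIV. M\<^sup>2 * (cmod (y$i))\<^sup>2)"
  proof (intro sum_mono mult_right_mono)
    show "(d i)\<^sup>2 \<le> M\<^sup>2" for i
      using M[of i] by (metis abs_le_square_iff abs_of_nonneg M0)
  qed simp
  also have "\<dots> = (M * norm x)\<^sup>2"
    by (simp add: \<open>norm y = norm x\<close>[symmetric] norm_vec_sq sum_distrib_left power_mult_distrib)
  finally have "norm (diag_mat d *v y) \<le> M * norm x"
    by (rule power2_le_imp_le) (simp add: M0)
  moreover have "norm ((V ** diag_mat d ** cadj V) *v x) = norm (V *v (diag_mat d *v y))"
    by (simp add: y_def matrix_vector_mul_assoc matrix_mul_assoc)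
  moreover have "norm (V *v (diag_mat d *v y)) = norm (diag_mat d *v y)"
    using V by (simp add: orthonormal_cols_norm_mult orthonormal_cols_def)
  ultimately show ?thesis
    by simp
qed

lemma pos_semidef_spectral:
  fixes L :: "complex^'k^'k"
  assumes "pos_semidef L"
  obtains W :: "complex^'k^'k" and e
  where "cadj W ** W = mat 1" and "L = W ** diag_mat e ** cadj W" and "\<forall>i. 0 \<le> e i"
proof -
  obtain W :: "complex^'k^'k" and e where W: "cadj W ** W = mat 1"
    and LW: "L = W ** diag_mat e ** cadj W"
    using assms hermitian_spectral by (auto simp: pos_semidef_def)
  have "cadj W ** L ** W = diag_mat e"
    by (simp add: LW matrix_mul_assoc[symmetric] matrix_mul_left_inverse[OF W] W)
  then have "cinner (column i W) (L *v column i W) = complex_of_real (e i)" for i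
    using cadj_mult_nth[of W "L ** W" i i] by (simp add: matrix_mul_assoc column_matrix_mult)
  moreover have "0 \<le> Re (cinner x (L *v x))" for x
    using assms by (simp add: pos_semidef_def)
  ultimately have "\<forall>i. 0 \<le> e i"
    by (metis Re_complex_of_real)
  with W LW show ?thesis
    by (rule that)
qed

lemma diag_mat_intertwine_sqrt:
  assumes QE2: "Q ** diag_mat (\<lambda>i. (e i)\<^sup>2) = diag_mat (\<lambda>i. (d i)\<^sup>2) ** Q"
    and e: "\<And>i. 0 \<le> e i" and d: "\<And>i. 0 \<le> d i"
  shows "Q ** diag_mat e = diag_mat d ** Q"
proof -
  have "Q $ i $ j * e j = d i * Q $ i $ j" for i j
  proof (cases "Q $ i $ j = 0")
    case False
    have "Q $ i $ j * (e j)\<^sup>2 = (d i)\<^sup>2 * Q $ i $ j"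
      using arg_cong[OF QE2, of "\<lambda>M. M $ i $ j"]
      by (simp add: matrix_mult_diag_mat_nth diag_mat_matrix_mult_nth)
    then have "complex_of_real ((e j)\<^sup>2) = complex_of_real ((d i)\<^sup>2)"
      using False by (simp add: mult.commute)
    then have "(e j)\<^sup>2 = (d i)\<^sup>2"
      by (simp only: of_real_eq_iff)
    then have "e j = d i"
      using e d by (simp add: power2_eq_iff_nonneg)
    then show ?thesis
      by (simp add: mult.commute)
  qed simp
  then show ?thesis
    by (simp add: vec_eq_iff matrix_mult_diag_mat_nth diag_mat_matrix_mult_nth)
qed

text \<open>The unitary \<open>V\<^sup>H W\<close> intertwines \<open>diag e\<^sup>2\<close> with \<open>diag d\<^sup>2\<close>, hence \<open>diag e\<close> with \<open>diag d\<close>.\<close>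

lemma unitary_diag_sqrt_unique:
  fixes L W V :: "complex^'k^'k"
  assumes W: "cadj W ** W = mat 1" and LW: "L = W ** diag_mat e ** cadj W" and e: "\<And>i. 0 \<le> e i"
    and V: "cadj V ** V = mat 1" and LV: "cadj L ** L = V ** diag_mat (\<lambda>i. (d i)\<^sup>2) ** cadj V"
    and d: "\<And>i. 0 \<le> d i"
  shows "L = V ** diag_mat d ** cadj V"
proof -
  have W': "W ** cadj W = mat 1" and V': "V ** cadj V = mat 1"
    using W V unitary_right_inverse by auto
  have "cadj L ** L = W ** diag_mat e ** (cadj W ** W) ** diag_mat e ** cadj W"
    by (simp add: LW cadj_mult matrix_mul_assoc)
  also have "\<dots> = W ** diag_mat (\<lambda>i. (e i)\<^sup>2) ** cadj W"
    by (simp add: W matrix_mul_assoc[symmetric] diag_mat_mult_diag_mat power2_eq_square)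
  finally have eq: "W ** diag_mat (\<lambda>i. (e i)\<^sup>2) ** cadj W = V ** diag_mat (\<lambda>i. (d i)\<^sup>2) ** cadj V"
    using LV by simp
  define Q where "Q = cadj V ** W"
  have "Q ** diag_mat (\<lambda>i. (e i)\<^sup>2) = cadj V ** (W ** diag_mat (\<lambda>i. (e i)\<^sup>2) ** cadj W) ** W"
    by (simp add: Q_def matrix_mul_assoc[symmetric] matrix_mul_left_inverse[OF W] W)
  also have "\<dots> = cadj V ** (V ** diag_mat (\<lambda>i. (d i)\<^sup>2) ** cadj V) ** W"
    by (simp add: eq)
  also have "\<dots> = diag_mat (\<lambda>i. (d i)\<^sup>2) ** Q"
    by (simp add: Q_def matrix_mul_assoc[symmetric] matrix_mul_left_inverse[OF V])
  finally have QE: "Q ** diag_mat e = diag_mat d ** Q"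
    using e d by (rule diag_mat_intertwine_sqrt)
  have "cadj V ** L = Q ** diag_mat e ** cadj W"
    by (simp add: LW Q_def matrix_mul_assoc[symmetric])
  also have "\<dots> = diag_mat d ** Q ** cadj W"
    by (simp add: QE)
  also have "\<dots> = diag_mat d ** cadj V"
    by (simp add: Q_def matrix_mul_assoc[symmetric] matrix_mul_left_inverse[OF W'] W')
  finally have "V ** (cadj V ** L) = V ** diag_mat d ** cadj V"
    by (simp add: matrix_mul_assoc)
  then show ?thesis
    by (simp add: matrix_mul_left_inverse[OF V'])
qed

section \<open>Singular value decompositions\<close>

lemma orthogonal_cols_factor:
  fixes a :: "'k::finite \<Rightarrow> complex^'n"
  assumes kn: "CARD('k) \<le> CARD('n)" and orth: "\<And>i j. i \<noteq> j \<Longrightarrow> cinner (a i) (a j) = 0"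
  obtains U where "orthonormal_cols U" and "mat_of_cols a = U ** diag_mat (\<lambda>i. norm (a i))"
proof -
  define s where "s = (\<lambda>i. norm (a i))"
  define J where "J = {i. s i \<noteq> 0}"
  define u where "u i = (1 / s i) *\<^sub>R a i" for i
  have "cinner (a i) (a i) = complex_of_real ((s i)\<^sup>2)" for i
    by (simp add: s_def cinner_self)
  then have "orthonormal_on J u"
    unfolding orthonormal_on_def
    by (auto simp: u_def cinner_scaleR_left cinner_scaleR_right orth J_def power2_eq_square)
  then obtain u' where u': "\<forall>i\<in>J. u' i = u i" "orthonormal_on UNIV u'"
    using orthonormal_on_extend[OF kn] by blast
  have "complex_of_real (s c) *s u' c = a c" for c
  proof (cases "c \<in> J")
    case True
    then have "s c \<noteq> 0"
      by (simp add: J_def)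
    then have "(1 / s c) *\<^sub>R (complex_of_real (s c) * a c $ i) = a c $ i" for i
      by (simp add: scaleR_conv_of_real)
    then show ?thesis
      using True u'(1) by (simp add: u_def vec_eq_iff)
  next
    case False
    then show ?thesis
      by (simp add: J_def s_def)
  qed
  then have "mat_of_cols a = mat_of_cols u' ** diag_mat s"
    by (simp add: mat_of_cols_mult_diag_mat)
  moreover have "orthonormal_cols (mat_of_cols u')"
    using u'(2) by (simp add: orthonormal_cols_def vec_eq_iff cadj_mat_of_cols_mult_nth mat_def
        orthonormal_on_def)
  ultimately show ?thesis
    unfolding s_def by (rule that[rotated])
qed

lemma svd_exists:
  fixes A :: "complex^'k^'n"
  assumes kn: "CARD('k) \<le> CARD('n)"
  shows "\<exists>U s V. is_svd A U s V"
proof -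
  have "hermitian (cadj A ** A)"
    by (simp add: hermitian_def cadj_mult)
  then obtain V :: "complex^'k^'k" and l where V: "cadj V ** V = mat 1"
    and H: "cadj A ** A = V ** diag_mat l ** cadj V"
    by (rule hermitian_spectral)
  define a where "a i = A *v column i V" for i
  have AV: "A ** V = mat_of_cols a"
    unfolding a_def by (subst (1) mat_of_cols_column[of V, symmetric]) (rule matrix_mult_mat_of_cols)
  have "cadj V ** (cadj A ** A) ** V = diag_mat l"
    by (simp add: H matrix_mul_assoc[symmetric] matrix_mul_left_inverse[OF V] V)
  moreover have "cadj V ** (cadj A ** A) ** V = cadj (A ** V) ** (A ** V)"
    by (simp add: cadj_mult matrix_mul_assoc)
  ultimately have gram: "cadj (mat_of_cols a) ** mat_of_cols a = diag_mat l"
    using AV by simp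
  have orth: "cinner (a i) (a j) = 0" if "i \<noteq> j" for i j
    using arg_cong[OF gram, of "\<lambda>M. M $ i $ j"] that by (simp add: cadj_mat_of_cols_mult_nth)
  then obtain U where U: "orthonormal_cols U" and "mat_of_cols a = U ** diag_mat (\<lambda>i. norm (a i))"
    by (rule orthogonal_cols_factor[where a = a, OF kn])
  then have "U ** diag_mat (\<lambda>i. norm (a i)) = A ** V"
    by (simp add: AV)
  then have "A = U ** diag_mat (\<lambda>i. norm (a i)) ** cadj V"
    by (simp add: matrix_mul_assoc[symmetric] unitary_right_inverse[OF V])
  moreover have "orthonormal_cols V"
    using V by (simp add: orthonormal_cols_def)
  ultimately have "is_svd A U (\<lambda>i. norm (a i)) V"
    using U by (simp add: is_svd_def)
  then show ?thesis
    by blast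
qed

lemma singular_values_svd:
  fixes A :: "complex^'k^'n"
  assumes "CARD('k) \<le> CARD('n)"
  obtains U s V where "is_svd A U s V" and "singular_values A = image_mset s (mset_set UNIV)"
proof -
  have "\<exists>M U s V. is_svd A U s V \<and> M = image_mset s (mset_set UNIV)"
    using svd_exists[OF assms] by blast
  from someI_ex[OF this] show ?thesis
    using that unfolding singular_values_def by blast
qed

lemma sigma_min_nonneg:
  fixes A :: "complex^'k^'n"
  assumes "CARD('k) \<le> CARD('n)"
  shows "0 \<le> sigma_min A"
proof -
  obtain U s V where "is_svd A U s V" and "singular_values A = image_mset s (mset_set UNIV)"
    using singular_values_svd[OF assms] .
  then show ?thesis
    by (simp add: sigma_min_def is_svd_def)
qed

lemma sigma_max_nonneg:
  fixes A :: "complex^'k^'n"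
  assumes "CARD('k) \<le> CARD('n)"
  shows "0 \<le> sigma_max A"
proof -
  obtain U s V where "is_svd A U s V" and "singular_values A = image_mset s (mset_set UNIV)"
    using singular_values_svd[OF assms] .
  then show ?thesis
    by (simp add: sigma_max_def is_svd_def Max_ge_iff)
qed

lemma svd_gram:
  assumes "is_svd A U s V"
  shows "cadj A ** A = V ** diag_mat (\<lambda>i. (s i)\<^sup>2) ** cadj V"
proof -
  have U: "cadj U ** U = mat 1"
    using assms by (simp add: is_svd_def orthonormal_cols_def)
  have "cadj A ** A = V ** diag_mat s ** (cadj U ** U) ** diag_mat s ** cadj V"
    using assms by (simp add: is_svd_def cadj_mult matrix_mul_assoc)
  then show ?thesis
    by (simp add: U matrix_mul_assoc[symmetric] diag_mat_mult_diag_mat power2_eq_square)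
qed

lemma svd_unitary: "is_svd A U s V \<Longrightarrow> cadj V ** V = mat 1"
  by (simp add: is_svd_def orthonormal_cols_def)

lemma svd_norm_sq:
  assumes "is_svd A U s V"
  shows "(norm A)\<^sup>2 = (\<Sum>i\<in>UNIV. (s i)\<^sup>2)"
proof -
  have "(norm A)\<^sup>2 = Re (trace (cadj A ** A))"
    by (simp add: power2_norm_eq_inner inner_eq_Re_trace)
  also have "\<dots> = Re (trace (diag_mat (\<lambda>i. (s i)\<^sup>2)))"
    by (simp add: svd_gram[OF assms] trace_unitary_conj[OF svd_unitary[OF assms]])
  finally show ?thesis
    by (simp add: trace_diag_mat)
qed

lemma svd_mult_column:
  assumes "is_svd A U s V"
  shows "A *v column i V = complex_of_real (s i) *s column i U"
proof -
  have "A ** V = U ** diag_mat s"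
    using assms unitary_right_inverse[OF svd_unitary[OF assms]]
    by (simp add: is_svd_def matrix_mul_assoc[symmetric] svd_unitary[OF assms])
  then have "A *v column i V = column i (U ** diag_mat s)"
    by (metis column_matrix_mult)
  then show ?thesis
    by (simp add: column_def vec_eq_iff matrix_mult_diag_mat_nth mult.commute)
qed

lemma svd_le_1_if_contraction:
  assumes svd: "is_svd A U s V" and contr: "\<And>x. norm (A *v x) \<le> norm x"
  shows "s i \<le> 1"
proof -
  have U: "orthonormal_cols U" and V: "orthonormal_cols V" and s: "0 \<le> s i"
    using svd by (auto simp: is_svd_def)
  have "norm (complex_of_real (s i) *s column i U) = s i"
    using s orthonormal_cols_norm_column[OF U]
    by (simp add: norm_vec_def L2_set_def norm_mult power_mult_distrib sum_distrib_left[symmetric]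
        real_sqrt_mult)
  then show ?thesis
    using contr[of "column i V"] orthonormal_cols_norm_column[OF V] svd_mult_column[OF svd]
    by simp
qed

lemma pos_semidef_polar_factor_eq_svd:
  fixes B Q :: "complex^'k^'n" and \<Lambda> :: "complex^'k^'k"
  assumes svd: "is_svd B U s V" and Q: "orthonormal_cols Q"
    and \<Lambda>: "pos_semidef \<Lambda>" and B: "B = Q ** \<Lambda>"
  shows "\<Lambda> = V ** diag_mat s ** cadj V"
proof -
  obtain W :: "complex^'k^'k" and e where W: "cadj W ** W = mat 1"
    and \<Lambda>W: "\<Lambda> = W ** diag_mat e ** cadj W" and e: "\<forall>i. 0 \<le> e i"
    using pos_semidef_spectral[OF \<Lambda>] by blast
  have s: "0 \<le> s i" for i
    using svd by (simp add: is_svd_def)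
  have "cadj B ** B = cadj \<Lambda> ** (cadj Q ** Q) ** \<Lambda>"
    by (simp add: B cadj_mult matrix_mul_assoc)
  then have "cadj \<Lambda> ** \<Lambda> = cadj B ** B"
    using Q by (simp add: orthonormal_cols_def)
  also have "\<dots> = V ** diag_mat (\<lambda>i. (s i)\<^sup>2) ** cadj V"
    by (rule svd_gram[OF svd])
  finally show ?thesis
    by (rule unitary_diag_sqrt_unique[OF W \<Lambda>W e[rule_format] svd_unitary[OF svd] _ s])
qed

lemma pos_semidef_polar_factor_bounds:
  fixes B Q :: "complex^'k^'n" and \<Lambda> :: "complex^'k^'k"
  assumes kn: "CARD('k) \<le> CARD('n)" and Q: "orthonormal_cols Q"
    and \<Lambda>: "pos_semidef \<Lambda>" and B: "B = Q ** \<Lambda>"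
  shows "sigma_min B * (norm x)\<^sup>2 \<le> inner x (\<Lambda> *v x)"
    and "norm (\<Lambda> *v x) \<le> sigma_max B * norm x"
    and "Re (trace \<Lambda>) = trace_norm B"
proof -
  obtain U s V where svd: "is_svd B U s V" and sv: "singular_values B = image_mset s (mset_set UNIV)"
    using singular_values_svd[OF kn] .
  have s: "0 \<le> s i" for i
    using svd by (simp add: is_svd_def)
  have \<Lambda>V: "\<Lambda> = V ** diag_mat s ** cadj V"
    by (rule pos_semidef_polar_factor_eq_svd[OF svd Q \<Lambda> B])
  have min: "sigma_min B = Min (range s)" and max: "sigma_max B = Max (range s)"
    by (simp_all add: sigma_min_def sigma_max_def sv)
  show "sigma_min B * (norm x)\<^sup>2 \<le> inner x (\<Lambda> *v x)"
    unfolding \<Lambda>V min by (rule inner_unitary_diag_ge[OF svd_unitary[OF svd]]) simp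
  show "norm (\<Lambda> *v x) \<le> sigma_max B * norm x"
    unfolding \<Lambda>V max by (rule norm_unitary_diag_le[OF svd_unitary[OF svd]]) (simp add: s)
  show "Re (trace \<Lambda>) = trace_norm B"
    by (simp add: \<Lambda>V trace_unitary_conj[OF svd_unitary[OF svd]] trace_diag_mat trace_norm_def sv
        sum_unfold_sum_mset)
qed

lemma rank_eq_card_imp_card_le:
  fixes B :: "complex^'k^'n"
  assumes "rank B = CARD('k)"
  shows "CARD('k) \<le> CARD('n)"
proof -
  have rows: "rows B = range (\<lambda>i. row i B)"
    by (auto simp: rows_def)
  have "vec.dim (rows B) \<le> card (rows B)"
    by (rule vec.dim_le_card[OF vec.span_superset]) (simp add: rows)
  also have "card (rows B) \<le> CARD('n)"
    by (simp add: rows card_image_le)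
  finally show ?thesis
    using assms by (simp add: row_rank_def_gen)
qed

lemma rank_eq_card_imp_sigma_min_pos:
  fixes B :: "complex^'k^'n"
  assumes rank: "rank B = CARD('k)"
  shows "0 < sigma_min B"
proof -
  have "vec.span (rows B) = UNIV"
    using rank by (metis row_rank_def_gen vec.dim_eq_full vec_dim_card vec.dim_UNIV vec.dimension_def)
  then obtain L where L: "L ** B = mat 1"
    using matrix_left_invertible_span_rows_gen by blast
  obtain U s V where svd: "is_svd B U s V" and sv: "singular_values B = image_mset s (mset_set UNIV)"
    using singular_values_svd[OF rank_eq_card_imp_card_le[OF rank]] .
  have "0 < s i" for i
  proof (rule ccontr)
    assume "\<not> 0 < s i"
    moreover have "0 \<le> s i"
      using svd by (simp add: is_svd_def)
    ultimately have "s i = 0"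
      by simp
    then have "L *v (B *v column i V) = 0"
      by (simp add: svd_mult_column[OF svd])
    then have "column i V = 0"
      by (simp add: matrix_vector_mul_assoc L)
    then show False
      using orthonormal_cols_norm_column[of V i] svd by (simp add: is_svd_def)
  qed
  then show ?thesis
    by (simp add: sigma_min_def sv)
qed

section \<open>Canonical angles\<close>

lemma sin_theta_F_eq_norm_proj_residual:
  fixes P Q :: "complex^'k^'n"
  assumes P: "orthonormal_cols P" and Q: "orthonormal_cols Q"
  shows "sin_theta_F P Q = norm (Q - P ** (cadj P ** Q))"
proof -
  define G where "G = cadj P ** Q"
  obtain U s V where svd: "is_svd G U s V" and sv: "singular_values G = image_mset s (mset_set UNIV)"
    using singular_values_svd[OF order_refl] .
  have "norm (G *v x) \<le> norm x" for x
  proof -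
    have "norm (G *v x) = norm (cadj P *v (Q *v x))"
      by (simp add: G_def matrix_vector_mul_assoc)
    also have "\<dots> \<le> norm (Q *v x)"
      by (rule norm_cadj_orthonormal_mult_le[OF P])
    finally show ?thesis
      by (simp add: orthonormal_cols_norm_mult[OF Q])
  qed
  then have s1: "s i \<le> 1" for i
    by (rule svd_le_1_if_contraction[OF svd])
  have s0: "0 \<le> s i" for i
    using svd by (simp add: is_svd_def)
  have "(sin (arccos (s i)))\<^sup>2 = 1 - (s i)\<^sup>2" for i
    using s0[of i] s1[of i] by (simp add: sin_arccos power_le_one)
  then have "sin_theta_F P Q = sqrt (\<Sum>i\<in>UNIV. 1 - (s i)\<^sup>2)"
    by (simp add: sin_theta_F_def sv sum_unfold_sum_mset multiset.map_comp comp_def flip: G_def)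
  also have "(\<Sum>i\<in>UNIV. 1 - (s i)\<^sup>2) = real CARD('k) - (norm G)\<^sup>2"
    by (simp add: sum_subtractf svd_norm_sq[OF svd])
  also have "\<dots> = (norm (Q - P ** G))\<^sup>2"
    using norm_proj_residual_matrix_sq[OF P, of Q] orthonormal_cols_norm_sq[OF Q] by (simp add: G_def)
  finally show ?thesis
    by (simp add: G_def)
qed

lemma norm_proj_residual_swap:
  fixes P Q :: "complex^'k^'n"
  assumes P: "orthonormal_cols P" and Q: "orthonormal_cols Q"
  shows "norm (P - Q ** (cadj Q ** P)) = norm (Q - P ** (cadj P ** Q))"
proof -
  have "(norm (P - Q ** (cadj Q ** P)))\<^sup>2 = (norm (Q - P ** (cadj P ** Q)))\<^sup>2"
    using norm_proj_residual_matrix_sq[OF P, of Q] norm_proj_residual_matrix_sq[OF Q, of P]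
      orthonormal_cols_norm_sq[OF P] orthonormal_cols_norm_sq[OF Q] norm_cadj[of "cadj P ** Q"]
    by (simp add: cadj_mult)
  then show ?thesis
    by (simp add: power2_eq_iff_nonneg)
qed

lemma col_space_subset_imp_proj_eq:
  assumes Q: "orthonormal_cols Q" and sub: "col_space P \<subseteq> col_space Q"
  shows "P = Q ** (cadj Q ** P)"
proof -
  have "column j (Q ** (cadj Q ** P)) = column j P" for j
  proof -
    have col: "column j P = P *v axis j 1"
      by (simp add: column_def vec_eq_iff matrix_vector_mult_def axis_def if_distrib if_distribR
          cong: if_cong)
    have "P *v axis j 1 \<in> col_space Q"
      using sub by (auto simp: col_space_def)
    then obtain v where "column j P = Q *v v"
      by (auto simp: col_space_def col)
    then show ?thesis
      using Q by (simp add: column_matrix_mult matrix_vector_mul_assoc orthonormal_cols_def)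
  qed
  then have "mat_of_cols (\<lambda>j. column j (Q ** (cadj Q ** P))) = mat_of_cols (\<lambda>j. column j P)"
    by simp
  then show ?thesis
    by (simp add: mat_of_cols_column)
qed

section \<open>Estimates for a polar factor\<close>

text \<open>Here \<open>Q\<close> stands for the polar factor \<open>P\<^sub>*\<close>, so that \<open>B = Q \<Lambda>\<close>, \<open>G = P\<^sup>H Q\<close> and
  \<open>W = Q - P G\<close>.\<close>

lemma cadj_proj_residual_mult:
  fixes P Q :: "complex^'k^'n"
  assumes P: "orthonormal_cols P" and Q: "orthonormal_cols Q"
  shows "cadj (Q - P ** (cadj P ** Q)) ** (Q - P ** (cadj P ** Q))
    = mat 1 - cadj (cadj P ** Q) ** (cadj P ** Q)"
proof -
  define G where "G = cadj P ** Q"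
  have "cadj Q ** (P ** G) = cadj G ** G"
    by (simp add: G_def cadj_mult matrix_mul_assoc)
  moreover have "cadj G ** cadj P ** Q = cadj G ** G"
    by (simp add: G_def matrix_mul_assoc[symmetric])
  moreover have "cadj G ** cadj P ** (P ** G) = cadj G ** G"
    using P by (simp add: matrix_mul_assoc[symmetric] matrix_mul_left_inverse orthonormal_cols_def)
  moreover have "cadj (Q - P ** G) ** (Q - P ** G)
      = cadj Q ** Q - cadj Q ** (P ** G) - (cadj G ** cadj P ** Q - cadj G ** cadj P ** (P ** G))"
    by (simp add: cadj_diff cadj_mult matrix_sub_ldistrib matrix_sub_rdistrib)
  ultimately show ?thesis
    using Q by (simp add: orthonormal_cols_def flip: G_def)
qed

lemma trace_gap_eq_energy:
  fixes P Q :: "complex^'k^'n" and \<Lambda> :: "complex^'k^'k"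
  assumes P: "orthonormal_cols P" and Q: "orthonormal_cols Q" and herm: "hermitian \<Lambda>"
  shows "2 * (Re (trace \<Lambda>) - Re (trace (cadj P ** (Q ** \<Lambda>))))
    = inner (mat 1 - cadj P ** Q) ((mat 1 - cadj P ** Q) ** \<Lambda>)
      + inner (Q - P ** (cadj P ** Q)) ((Q - P ** (cadj P ** Q)) ** \<Lambda>)"
proof -
  define G where "G = cadj P ** Q"
  define f where "f M = Re (trace (M ** \<Lambda>))" for M :: "complex^'k^'k"
  have f_inner: "inner X (X ** \<Lambda>) = f (cadj X ** X)" for X :: "complex^'k^'m"
    by (simp add: f_def inner_eq_Re_trace matrix_mul_assoc)
  have f_add: "f (A + C) = f A + f C" and f_diff: "f (A - C) = f A - f C" for A C
    by (simp_all add: f_def matrix_add_rdistrib matrix_sub_rdistrib trace_add trace_sub)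
  have f_cadj: "f (cadj G) = f G"
  proof -
    have "f (cadj G) = Re (trace (cadj (\<Lambda> ** G)))"
      using herm by (simp add: f_def cadj_mult hermitian_def)
    also have "\<dots> = f G"
      unfolding f_def Re_trace_cadj by (subst trace_mul_sym) (rule refl)
    finally show ?thesis .
  qed
  have "cadj (mat 1 - G) ** (mat 1 - G) = mat 1 - G - cadj G + cadj G ** G"
    by (simp add: cadj_diff matrix_sub_ldistrib matrix_sub_rdistrib algebra_simps)
  moreover have "cadj (Q - P ** G) ** (Q - P ** G) = mat 1 - cadj G ** G"
    unfolding G_def by (rule cadj_proj_residual_mult[OF P Q])
  moreover have "Re (trace (cadj P ** (Q ** \<Lambda>))) = f G"
    by (simp add: f_def G_def matrix_mul_assoc)
  ultimately show ?thesis
    by (simp add: f_inner f_add f_diff f_cadj flip: G_def) (simp add: f_def)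
qed

lemma norm_proj_residual_mult_le:
  fixes P Q :: "complex^'k^'n" and \<Lambda> :: "complex^'k^'k"
  assumes herm: "hermitian \<Lambda>" and c: "0 \<le> c" and bound: "\<And>x. norm (\<Lambda> *v x) \<le> c * norm x"
  shows "norm (Q ** \<Lambda> - P ** (cadj P ** (Q ** \<Lambda>))) \<le> c * norm (Q - P ** (cadj P ** Q))"
proof -
  have "norm ((Q - P ** (cadj P ** Q)) ** \<Lambda>) \<le> c * norm (Q - P ** (cadj P ** Q))"
    by (rule norm_matrix_mult_right_le[OF c]) (use herm bound in \<open>simp add: hermitian_def\<close>)
  moreover have "Q ** \<Lambda> - P ** (cadj P ** (Q ** \<Lambda>)) = (Q - P ** (cadj P ** Q)) ** \<Lambda>"
    by (simp add: matrix_sub_rdistrib matrix_mul_assoc)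
  ultimately show ?thesis
    by simp
qed

lemma proj_residual_energy_le:
  fixes P Q :: "complex^'k^'n" and \<Lambda> :: "complex^'k^'k"
  assumes P: "orthonormal_cols P" and Q: "orthonormal_cols Q" and herm: "hermitian \<Lambda>"
    and low: "\<And>x. m * (norm x)\<^sup>2 \<le> inner x (\<Lambda> *v x)" and m: "0 \<le> m"
  shows "m * (norm (Q - P ** (cadj P ** Q)))\<^sup>2 \<le> 2 * (Re (trace \<Lambda>) - Re (trace (cadj P ** (Q ** \<Lambda>))))"
  using trace_gap_eq_energy[OF P Q herm] m
    inner_matrix_mult_right_ge[OF herm low, of "mat 1 - cadj P ** Q"]
    inner_matrix_mult_right_ge[OF herm low, of "Q - P ** (cadj P ** Q)"]
  by (smt (verit) mult_nonneg_nonneg zero_le_power2)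

lemma same_col_space_energy_le:
  fixes P Q :: "complex^'k^'n" and \<Lambda> :: "complex^'k^'k"
  assumes P: "orthonormal_cols P" and Q: "orthonormal_cols Q" and herm: "hermitian \<Lambda>"
    and low: "\<And>x. m * (norm x)\<^sup>2 \<le> inner x (\<Lambda> *v x)" and range: "col_space P = col_space Q"
  shows "m * (norm (P - Q))\<^sup>2 \<le> 2 * (Re (trace \<Lambda>) - Re (trace (cadj P ** (Q ** \<Lambda>))))"
proof -
  define C where "C = cadj Q ** P"
  have PQ: "P = Q ** C"
    unfolding C_def using Q range by (simp add: col_space_subset_imp_proj_eq)
  have "cadj C ** C = cadj (Q ** C) ** (Q ** C)"
    using Q by (simp add: cadj_mult matrix_mul_assoc[symmetric] matrix_mul_left_inverse
        orthonormal_cols_def)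
  also have "\<dots> = mat 1"
    using P by (simp add: PQ[symmetric] orthonormal_cols_def)
  finally have CC: "cadj C ** C = mat 1" .
  have "cadj (cadj P ** Q) ** (cadj P ** Q) = mat 1"
    using unitary_right_inverse[OF CC] by (simp add: C_def cadj_mult)
  then have "cadj (Q - P ** (cadj P ** Q)) ** (Q - P ** (cadj P ** Q)) = 0"
    by (simp add: cadj_proj_residual_mult[OF P Q])
  then have "(norm (Q - P ** (cadj P ** Q)))\<^sup>2 = 0"
    by (simp add: power2_norm_eq_inner inner_eq_Re_trace trace_def)
  then have W: "Q - P ** (cadj P ** Q) = 0"
    by simp
  have "norm (P - Q) = norm (Q ** (C - mat 1))"
    by (simp add: PQ matrix_sub_ldistrib)
  also have "\<dots> = norm (cadj (C - mat 1))"
    by (simp add: orthonormal_cols_norm_matrix_mult[OF Q] norm_cadj)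
  also have "\<dots> = norm (mat 1 - cadj P ** Q)"
    by (simp add: C_def cadj_diff cadj_mult norm_minus_commute)
  finally show ?thesis
    using trace_gap_eq_energy[OF P Q herm] inner_matrix_mult_right_ge[OF herm low] W by simp
qed

lemma sylvester_norm_le:
  fixes \<Lambda> :: "complex^'k^'k" and M :: "complex^'l^'l" and X :: "complex^'l^'k"
  assumes low\<Lambda>: "\<And>x. m * (norm x)\<^sup>2 \<le> inner x (\<Lambda> *v x)"
    and herm: "hermitian M" and lowM: "\<And>x. m' * (norm x)\<^sup>2 \<le> inner x (M *v x)"
    and pos: "0 < m + m'"
  shows "(m + m') * norm X \<le> norm (\<Lambda> ** X + X ** M)"
proof (cases "X = 0")
  case False
  have "(m + m') * (norm X)\<^sup>2 \<le> inner X (\<Lambda> ** X + X ** M)"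
    using inner_matrix_mult_ge[OF low\<Lambda>, of X] inner_matrix_mult_right_ge[OF herm lowM, of X]
    by (simp add: inner_add_right algebra_simps)
  also have "\<dots> \<le> norm X * norm (\<Lambda> ** X + X ** M)"
    by (rule norm_cauchy_schwarz)
  finally have "norm X * ((m + m') * norm X) \<le> norm X * norm (\<Lambda> ** X + X ** M)"
    by (simp add: power2_eq_square mult_ac)
  then show ?thesis
    using False by simp
qed (simp add: pos less_imp_le)

lemma norm_cadj_proj_residual_le:
  fixes P Q :: "complex^'k^'n"
  assumes P: "orthonormal_cols P" and Q: "orthonormal_cols Q"
  shows "norm (cadj (Q - P ** (cadj P ** Q)) *v y) \<le> norm y"
proof -
  have "cadj (Q - P ** (cadj P ** Q)) *v y = cadj Q *v (y - P *v (cadj P *v y))"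
    by (simp add: cadj_diff cadj_mult matrix_vector_mult_diff_rdistrib
        matrix_vector_mult_diff_distrib matrix_vector_mul_assoc matrix_mul_assoc)
  then have "norm (cadj (Q - P ** (cadj P ** Q)) *v y) \<le> norm (y - P *v (cadj P *v y))"
    using norm_cadj_orthonormal_mult_le[OF Q] by simp
  also have "\<dots> \<le> norm y"
    by (rule norm_proj_residual_le[OF P])
  finally show ?thesis .
qed

text \<open>The point is that \<open>M = P\<^sup>H B = G \<Lambda>\<close> is Hermitian, so \<open>M = \<Lambda> G\<^sup>H\<close>.\<close>

lemma polar_sylvester_eq:
  fixes P Q :: "complex^'k^'n" and \<Lambda> :: "complex^'k^'k"
  assumes P: "orthonormal_cols P" and Q: "orthonormal_cols Q" and herm: "hermitian \<Lambda>"
    and hermM: "hermitian (cadj P ** (Q ** \<Lambda>))"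
  shows "\<Lambda> ** (mat 1 - cadj Q ** P) + (mat 1 - cadj Q ** P) ** (cadj P ** (Q ** \<Lambda>))
    = cadj (Q - P ** (cadj P ** Q)) ** (Q - P ** (cadj P ** Q)) ** \<Lambda>"
proof -
  define G where "G = cadj P ** Q"
  have C: "cadj Q ** P = cadj G"
    by (simp add: G_def cadj_mult)
  have M: "cadj P ** (Q ** \<Lambda>) = \<Lambda> ** cadj G"
    using hermM herm by (metis G_def cadj_mult hermitian_def matrix_mul_assoc)
  have "\<Lambda> ** (mat 1 - cadj G) = \<Lambda> - cadj P ** (Q ** \<Lambda>)"
    by (simp add: matrix_sub_ldistrib M)
  moreover have "(mat 1 - cadj G) ** (cadj P ** (Q ** \<Lambda>)) = cadj P ** (Q ** \<Lambda>) - cadj G ** G ** \<Lambda>"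
    by (simp add: matrix_sub_rdistrib G_def matrix_mul_assoc)
  moreover have "cadj (Q - P ** G) ** (Q - P ** G) ** \<Lambda> = \<Lambda> - cadj G ** G ** \<Lambda>"
    using cadj_proj_residual_mult[OF P Q] by (simp add: matrix_sub_rdistrib flip: G_def)
  ultimately show ?thesis
    by (simp add: C flip: G_def)
qed

lemma norm_diff_polar_factor_le:
  fixes P Q :: "complex^'k^'n" and \<Lambda> :: "complex^'k^'k"
  assumes P: "orthonormal_cols P" and Q: "orthonormal_cols Q" and herm: "hermitian \<Lambda>"
    and low: "\<And>x. m * (norm x)\<^sup>2 \<le> inner x (\<Lambda> *v x)"
    and c: "0 \<le> c" and up: "\<And>x. norm (\<Lambda> *v x) \<le> c * norm x"
    and hermM: "hermitian (cadj P ** (Q ** \<Lambda>))"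
    and lowM: "\<And>x. m' * (norm x)\<^sup>2 \<le> inner x ((cadj P ** (Q ** \<Lambda>)) *v x)"
    and pos: "0 < m + m'"
  shows "norm (P - Q) \<le> (1 + c / (m + m')) * norm (Q - P ** (cadj P ** Q))"
proof -
  define W where "W = Q - P ** (cadj P ** Q)"
  define X where "X = mat 1 - cadj Q ** P"
  have "(m + m') * norm X \<le> norm (cadj W ** W ** \<Lambda>)"
    using sylvester_norm_le[OF low hermM lowM pos, of X]
    by (simp add: X_def W_def polar_sylvester_eq[OF P Q herm hermM])
  moreover have "norm (cadj W ** W ** \<Lambda>) \<le> c * norm (cadj W ** W)"
    by (rule norm_matrix_mult_right_le[OF c]) (use herm up in \<open>simp add: hermitian_def\<close>)
  moreover have "norm (cadj W ** W) \<le> 1 * norm W"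
    by (rule norm_matrix_mult_le) (simp_all add: W_def norm_cadj_proj_residual_le[OF P Q])
  ultimately have "(m + m') * norm X \<le> c * norm W"
    using c by (smt (verit) mult_left_mono)
  then have X: "norm X \<le> c / (m + m') * norm W"
    using pos by (simp add: field_simps)
  have "P - Q = (P - Q ** (cadj Q ** P)) - Q ** X"
    by (simp add: X_def matrix_sub_ldistrib)
  then have "norm (P - Q) \<le> norm (P - Q ** (cadj Q ** P)) + norm (Q ** X)"
    by (metis norm_triangle_ineq4)
  also have "\<dots> = norm W + norm X"
    by (simp add: W_def norm_proj_residual_swap[OF P Q] orthonormal_cols_norm_matrix_mult[OF Q])
  finally show ?thesis
    using X by (simp add: W_def algebra_simps)
qed

lemma pos_def_imp_pos_semidef:
  assumes "pos_def M"
  shows "pos_semidef M"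
proof -
  have "0 \<le> Re (cinner x (M *v x))" for x
  proof (cases "x = 0")
    case True
    then show ?thesis
      by (simp add: cinner_def)
  next
    case False
    then show ?thesis
      using assms by (simp add: pos_def_def less_imp_le)
  qed
  then show ?thesis
    using assms by (simp add: pos_def_def pos_semidef_def)
qed

lemma polar_proj_residual_div_sigma_max_le:
  fixes B P Q :: "complex^'k^'n" and \<Lambda> :: "complex^'k^'k"
  assumes kn: "CARD('k) \<le> CARD('n)" and Q: "orthonormal_cols Q"
    and \<Lambda>: "pos_semidef \<Lambda>" and B: "B = Q ** \<Lambda>"
  shows "frob_norm (B - P ** (cadj P ** B)) / sigma_max B \<le> norm (Q - P ** (cadj P ** Q))"
proof -
  have "hermitian \<Lambda>"
    using \<Lambda> by (simp add: pos_semidef_def)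
  then have "norm (Q ** \<Lambda> - P ** (cadj P ** (Q ** \<Lambda>))) \<le> sigma_max B * norm (Q - P ** (cadj P ** Q))"
    by (rule norm_proj_residual_mult_le[OF _ sigma_max_nonneg[OF kn]
          pos_semidef_polar_factor_bounds(2)[OF kn Q \<Lambda> B]])
  then have "frob_norm (B - P ** (cadj P ** B)) \<le> sigma_max B * norm (Q - P ** (cadj P ** Q))"
    by (simp add: frob_norm_eq_norm B)
  then show ?thesis
    using sigma_max_nonneg[OF kn, of B]
    by (cases "sigma_max B = 0") (simp_all add: divide_le_eq mult.commute)
qed

lemma polar_proj_residual_energy_le:
  fixes B P Q :: "complex^'k^'n" and \<Lambda> :: "complex^'k^'k"
  assumes kn: "CARD('k) \<le> CARD('n)" and P: "orthonormal_cols P" and Q: "orthonormal_cols Q"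
    and \<Lambda>: "pos_semidef \<Lambda>" and B: "B = Q ** \<Lambda>"
  shows "sigma_min B * (norm (Q - P ** (cadj P ** Q)))\<^sup>2 \<le> 2 * (trace_norm B - Re (trace (cadj P ** B)))"
  using proj_residual_energy_le[OF P Q _ pos_semidef_polar_factor_bounds(1)[OF kn Q \<Lambda> B]
      sigma_min_nonneg[OF kn]] \<Lambda>
  by (simp add: pos_semidef_def pos_semidef_polar_factor_bounds(3)[OF kn Q \<Lambda> B] B)

lemma polar_same_col_space_energy_le:
  fixes B P Q :: "complex^'k^'n" and \<Lambda> :: "complex^'k^'k"
  assumes kn: "CARD('k) \<le> CARD('n)" and P: "orthonormal_cols P" and Q: "orthonormal_cols Q"
    and \<Lambda>: "pos_semidef \<Lambda>" and B: "B = Q ** \<Lambda>" and range: "col_space P = col_space Q"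
  shows "sigma_min B * (norm (P - Q))\<^sup>2 \<le> 2 * (trace_norm B - Re (trace (cadj P ** B)))"
  using same_col_space_energy_le[OF P Q _ pos_semidef_polar_factor_bounds(1)[OF kn Q \<Lambda> B] range] \<Lambda>
  by (simp add: pos_semidef_def pos_semidef_polar_factor_bounds(3)[OF kn Q \<Lambda> B] B)

lemma polar_norm_diff_le:
  fixes B P Q :: "complex^'k^'n" and \<Lambda> :: "complex^'k^'k"
  assumes kn: "CARD('k) \<le> CARD('n)" and P: "orthonormal_cols P" and Q: "orthonormal_cols Q"
    and \<Lambda>: "pos_semidef \<Lambda>" and B: "B = Q ** \<Lambda>"
    and smin: "0 < sigma_min B" and pd: "pos_def (cadj P ** B)"
  shows "norm (P - Q)
    \<le> (1 + sigma_max B / (sigma_min B + sigma_min (cadj P ** B))) * norm (Q - P ** (cadj P ** Q))"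
proof -
  have "hermitian \<Lambda>"
    using \<Lambda> by (simp add: pos_semidef_def)
  moreover have "hermitian (cadj P ** (Q ** \<Lambda>))"
    using pd by (simp add: pos_def_def B)
  moreover have "sigma_min (cadj P ** B) * (norm x)\<^sup>2 \<le> inner x ((cadj P ** (Q ** \<Lambda>)) *v x)" for x
    using pos_semidef_polar_factor_bounds(1)[OF order_refl orthonormal_cols_mat_1
        pos_def_imp_pos_semidef[OF pd] matrix_mul_lid[symmetric]]
    by (simp add: B)
  moreover have "0 < sigma_min B + sigma_min (cadj P ** B)"
    using smin sigma_min_nonneg[of "cadj P ** B"] by simp
  ultimately show ?thesis
    using norm_diff_polar_factor_le[OF P Q _ pos_semidef_polar_factor_bounds(1)[OF kn Q \<Lambda> B]
        sigma_max_nonneg[OF kn] pos_semidef_polar_factor_bounds(2)[OF kn Q \<Lambda> B]]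
    by simp
qed

theorem theorem4p3:
  fixes B P Ps :: "complex^'k^'n"
  assumes rankB: "rank B = CARD('k)"
    and Ps: "orth_polar_factor Ps B"
    and P: "orthonormal_cols P"
  defines "\<eta> \<equiv> trace_norm B - Re (trace (cadj P ** B))"
  defines "\<epsilon> \<equiv> sqrt (2 * \<eta> / sigma_min B)"
  shows "(frob_norm (B - P ** (cadj P ** B)) / sigma_max B \<le> sin_theta_F P Ps
           \<and> sin_theta_F P Ps \<le> \<epsilon>)
         \<and> (pos_def (cadj P ** B) \<longrightarrow>
           frob_norm (P - Ps) \<le> (1 + 2 * sigma_max B / (sigma_min B + sigma_min (cadj P ** B))) * \<epsilon>)
         \<and> (col_space P = col_space Ps \<longrightarrow> frob_norm (P - Ps) \<le> \<epsilon>)"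
proof -
  obtain \<Lambda> where Ps_orth: "orthonormal_cols Ps" and \<Lambda>: "pos_semidef \<Lambda>" and B: "B = Ps ** \<Lambda>"
    using Ps by (auto simp: orth_polar_factor_def)
  have kn: "CARD('k) \<le> CARD('n)" and smin: "0 < sigma_min B"
    using rankB by (rule rank_eq_card_imp_card_le, rule rank_eq_card_imp_sigma_min_pos)
  note polar = kn P Ps_orth \<Lambda> B
  have le_\<epsilon>: "a \<le> \<epsilon>" if "0 \<le> a" and "sigma_min B * a\<^sup>2 \<le> 2 * \<eta>" for a
    using that smin by (simp add: \<epsilon>_def real_le_rsqrt pos_le_divide_eq mult.commute)
  let ?W = "Ps - P ** (cadj P ** Ps)"
  have sin: "sin_theta_F P Ps = norm ?W"
    by (rule sin_theta_F_eq_norm_proj_residual[OF P Ps_orth])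
  have W_\<epsilon>: "norm ?W \<le> \<epsilon>"
    using polar_proj_residual_energy_le[OF polar] by (intro le_\<epsilon>) (simp_all add: \<eta>_def)
  have b: "frob_norm (P - Ps) \<le> (1 + 2 * sigma_max B / (sigma_min B + sigma_min (cadj P ** B))) * \<epsilon>"
    if pd: "pos_def (cadj P ** B)"
  proof -
    let ?m = "sigma_min B + sigma_min (cadj P ** B)"
    have "0 < ?m"
      using smin sigma_min_nonneg[of "cadj P ** B"] by simp
    have "norm (P - Ps) \<le> (1 + sigma_max B / ?m) * norm ?W"
      by (rule polar_norm_diff_le[OF polar smin pd])
    also have "\<dots> \<le> (1 + 2 * sigma_max B / ?m) * \<epsilon>"
      using \<open>0 < ?m\<close> sigma_max_nonneg[OF kn, of B] W_\<epsilon>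
      by (intro mult_mono) (simp_all add: divide_right_mono)
    finally show ?thesis
      by (simp add: frob_norm_eq_norm)
  qed
  show ?thesis
    using polar_proj_residual_div_sigma_max_le[OF kn Ps_orth \<Lambda> B] W_\<epsilon> b
      polar_same_col_space_energy_le[OF polar] le_\<epsilon>
    by (simp add: sin frob_norm_eq_norm \<eta>_def)
qed

end
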